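(* Let $M$ be a $k\times k$ matrix (for some $k\ge1$) all of whose entries are positive integers, such that $M^2=3M$. Then $M$ is one of $$M_1=(3),\ M_2=\begin{pmatrix}2&1\\2&1\end{pmatrix},\ M_3=\begin{pmatrix}2&2\\1&1\end{pmatrix},\ M_4=\begin{pmatrix}1&1\\2&2\end{pmatrix},\ M_5=\begin{pmatrix}1&2\\1&2\end{pmatrix},\ M_6=\begin{pmatrix}1&1&1\\1&1&1\\1&1&1\end{pmatrix}.$$ *)

theory Defs
  imports "Jordan_Normal_Form.Matrix"
begin

definition M1 :: "int mat" where "M1 = mat_of_rows_list 1 [[3]]"
definition M2 :: "int mat" where "M2 = mat_of_rows_list 2 [[2,1],[2,1]]"
definition M3 :: "int mat" where "M3 = mat_of_rows_list 2 [[2,2],[1,1]]"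
definition M4 :: "int mat" where "M4 = mat_of_rows_list 2 [[1,1],[2,2]]"
definition M5 :: "int mat" where "M5 = mat_of_rows_list 2 [[1,2],[1,2]]"
definition M6 :: "int mat" where "M6 = mat_of_rows_list 3 [[1,1,1],[1,1,1],[1,1,1]]"

end

theory Submission
  imports Defs
begin

text \<open>
  Comparing the diagonal entries of \<open>M\<^sup>2 = 3M\<close> gives
  \<open>a (3 - a) = (\<Sum>l \<noteq> i. m\<^sub>i\<^sub>l m\<^sub>l\<^sub>i)\<close> for \<open>a = m\<^sub>i\<^sub>i\<close>.
  For an integer \<open>a\<close> the left side is at most 2, while each of the \<open>k - 1\<close>
  products on the right is at least 1; hence \<open>k \<le> 3\<close>.
  For \<open>k = 1\<close> the entry is 3. For \<open>k = 2\<close> an off-diagonal equation gives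
  \<open>m\<^sub>0\<^sub>0 + m\<^sub>1\<^sub>1 = 3\<close> and the diagonal one \<open>m\<^sub>0\<^sub>1 m\<^sub>1\<^sub>0 = 2\<close>.
  For \<open>k = 3\<close> the bound is attained, so every off-diagonal product, hence every
  off-diagonal entry, is 1, and then the off-diagonal equations force a diagonal of ones.
\<close>

lemma mat_eq_mat_of_rows_list_entries:
  assumes "M \<in> carrier_mat n m"
  shows "M = mat_of_rows_list m [[M $$ (i, j). j \<leftarrow> [0..<m]]. i \<leftarrow> [0..<n]]"
  using assms by (intro eq_matI) (auto simp: mat_of_rows_list_def)

lemma index_mult_mat_sum:
  assumes "A \<in> carrier_mat n m" and "B \<in> carrier_mat m p" and "i < n" and "j < p"
  shows "(A * B) $$ (i, j) = (\<Sum>l<m. A $$ (i, l) * B $$ (l, j))"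
  using assms by (simp add: scalar_prod_def lessThan_atLeast0)

lemma int_mult_three_minus_le_2: "(a :: int) * (3 - a) \<le> 2"
proof -
  have "0 \<le> (a - 1) * (a - 2)"
    by (cases "a \<le> 1") (auto intro: mult_nonpos_nonpos mult_nonneg_nonneg)
  then show ?thesis
    by (simp add: algebra_simps)
qed

lemma int_mult_three_minus_pos:
  assumes "0 < (a :: int) * (3 - a)"
  shows "a = 1 \<or> a = 2"
  using assms by (auto simp: zero_less_mult_iff)

lemma int_mult_eq_2:
  fixes x y :: int
  assumes "0 < x" and "0 < y" and "x * y = 2"
  shows "(x = 1 \<and> y = 2) \<or> (x = 2 \<and> y = 1)"
proof -
  have "x * 1 \<le> x * y"
    using assms by (intro mult_left_mono) auto
  then have "x \<le> 2"
    using assms(3) by simp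
  then consider "x = 1" | "x = 2"
    using assms(1) by linarith
  then show ?thesis
    using assms(3) by cases auto
qed

lemma sum_le_card_imp_eq_1:
  fixes f :: "'b \<Rightarrow> 'a :: linordered_idom"
  assumes "finite S" and "\<forall>x \<in> S. 1 \<le> f x" and "sum f S \<le> of_nat (card S)" and "x \<in> S"
  shows "f x = 1"
proof -
  have "sum (\<lambda>x. f x - 1) S \<le> 0"
    using assms(3) by (simp add: sum_subtractf)
  then have "sum (\<lambda>x. f x - 1) S = 0"
    using assms(2) sum_nonneg[of S "\<lambda>x. f x - 1"] by simp
  then show ?thesis
    using assms(1,2,4) sum_nonneg_eq_0_iff[of S "\<lambda>x. f x - 1"] by simp
qed

locale positive_matrix_square_eq_triple =
  fixes M :: "int mat" and k :: nat
  assumes carrier: "M \<in> carrier_mat k k"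
    and positive: "\<forall>i<k. \<forall>j<k. M $$ (i, j) > 0"
    and square: "M * M = 3 \<cdot>\<^sub>m M"
begin

lemma entry_pos: "i < k \<Longrightarrow> j < k \<Longrightarrow> 0 < M $$ (i, j)"
  using positive by blast

lemma product_entry:
  "i < k \<Longrightarrow> j < k \<Longrightarrow> (\<Sum>l<k. M $$ (i, l) * M $$ (l, j)) = 3 * M $$ (i, j)"
  using index_mult_mat_sum[OF carrier carrier] square carrier by simp

lemma diagonal_entry:
  assumes "i < k"
  shows "M $$ (i, i) * (3 - M $$ (i, i)) = (\<Sum>l \<in> {..<k} - {i}. M $$ (i, l) * M $$ (l, i))"
  using product_entry[OF assms assms] sum.remove[of "{..<k}" i "\<lambda>l. M $$ (i, l) * M $$ (l, i)"] assms
  by (simp add: algebra_simps)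

lemma entry_product_ge_1:
  "i < k \<Longrightarrow> l < k \<Longrightarrow> 1 \<le> M $$ (i, l) * M $$ (l, i)"
  using mult_pos_pos[OF entry_pos[of i l] entry_pos[of l i]] by linarith

lemma dim_le_3: "k \<le> 3"
proof (cases "k = 0")
  case False
  have "int (card ({..<k} - {0})) \<le> (\<Sum>l \<in> {..<k} - {0}. M $$ (0, l) * M $$ (l, 0))"
    using sum_mono[of "{..<k} - {0}" "\<lambda>_. 1" "\<lambda>l. M $$ (0, l) * M $$ (l, 0)"]
      entry_product_ge_1 False by simp
  also have "\<dots> \<le> 2"
    using diagonal_entry[of 0] False int_mult_three_minus_le_2[of "M $$ (0, 0)"] by simp
  finally show ?thesis
    using False by simp
qed simp

lemma dim_1:
  assumes "k = 1"
  shows "M = M1"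
proof -
  have no_off_diagonal: "{..<k} - {0} = {}"
    using assms by auto
  have "M $$ (0, 0) = 3"
    using diagonal_entry[of 0, unfolded no_off_diagonal] entry_pos[of 0 0] assms by simp
  then show ?thesis
    using carrier assms by (intro eq_matI) (auto simp: M1_def mat_of_rows_list_def)
qed

lemma dim_2:
  assumes "k = 2"
  shows "M = M2 \<or> M = M3 \<or> M = M4 \<or> M = M5"
proof -
  define a b c d where "a = M $$ (0, 0)" and "b = M $$ (0, 1)" and "c = M $$ (1, 0)" and "d = M $$ (1, 1)"
  have pos: "0 < a" "0 < b" "0 < c" "0 < d"
    using entry_pos assms unfolding a_def b_def c_def d_def by auto
  have entry_eq: "M $$ (i, 0) * M $$ (0, j) + M $$ (i, 1) * M $$ (1, j) = 3 * M $$ (i, j)"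
    if "i < 2" "j < 2" for i j
    using product_entry that assms by (simp add: numeral_2_eq_2)
  have "a * (3 - a) = b * c"
    using entry_eq[of 0 0] unfolding a_def b_def c_def by (simp add: algebra_simps)
  then have a: "a = 1 \<or> a = 2" and bc: "b * c = 2"
    using int_mult_three_minus_pos[of a] pos by (auto simp: zero_less_mult_iff)
  have "b * (a + d) = b * 3"
    using entry_eq[of 0 1] unfolding a_def b_def d_def by (simp add: algebra_simps)
  then have d: "d = 3 - a"
    using pos by simp
  have "M = mat_of_rows_list 2 [[M $$ (i, j). j \<leftarrow> [0..<2]]. i \<leftarrow> [0..<2]]"
    using carrier assms by (simp add: mat_eq_mat_of_rows_list_entries)
  also have "\<dots> = mat_of_rows_list 2 [[a, b], [c, d]]"
    unfolding a_def b_def c_def d_def by (simp add: upt_rec)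
  finally show ?thesis
    using a d int_mult_eq_2[OF pos(2,3) bc] unfolding M2_def M3_def M4_def M5_def by auto
qed

lemma dim_3_off_diagonal:
  assumes "k = 3" and "i < k" and "j < k" and "i \<noteq> j"
  shows "M $$ (i, j) = 1"
proof -
  let ?S = "{..<k} - {i}"
  have "(\<Sum>l \<in> ?S. M $$ (i, l) * M $$ (l, i)) \<le> of_nat (card ?S)"
    using diagonal_entry[OF assms(2)] int_mult_three_minus_le_2[of "M $$ (i, i)"] assms by simp
  then have "M $$ (i, j) * M $$ (j, i) = 1"
    by (rule sum_le_card_imp_eq_1[rotated 2]) (use entry_product_ge_1 assms in auto)
  then show ?thesis
    using entry_pos assms by (simp add: pos_zmult_eq_1_iff)
qed

lemma dim_3:
  assumes "k = 3"
  shows "M = M6"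
proof -
  have entry_eq: "M $$ (i, 0) * M $$ (0, j) + M $$ (i, 1) * M $$ (1, j) + M $$ (i, 2) * M $$ (2, j) = 3 * M $$ (i, j)"
    if "i < 3" "j < 3" for i j
    using product_entry that assms by (simp add: numeral_3_eq_3 numeral_2_eq_2)
  have off_diagonal: "i < 3 \<Longrightarrow> j < 3 \<Longrightarrow> i \<noteq> j \<Longrightarrow> M $$ (i, j) = 1" for i j
    using dim_3_off_diagonal assms by simp
  have "M $$ (0, 0) + M $$ (1, 1) = 2" "M $$ (0, 0) + M $$ (2, 2) = 2"
    using entry_eq[of 0 1] entry_eq[of 0 2] off_diagonal by simp_all
  then have "M $$ (i, i) = 1" if "i < 3" for i
    using that entry_pos[of 0 0] entry_pos[of 1 1] entry_pos[of 2 2] assms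
    by (auto simp: less_Suc_eq numeral_3_eq_3 numeral_2_eq_2)
  then have "M $$ (i, j) = 1" if "i < 3" "j < 3" for i j
    using off_diagonal that by (cases "i = j") auto
  then show ?thesis
    using carrier assms
    by (intro eq_matI) (auto simp: M6_def mat_of_rows_list_def less_Suc_eq numeral_3_eq_3)
qed

end

theorem mainTheorem8:
  fixes M :: "int mat" and k :: nat
  assumes "k \<ge> 1"
    and "M \<in> carrier_mat k k"
    and "\<forall>i<k. \<forall>j<k. M $$ (i, j) > 0"
    and "M ^\<^sub>m 2 = 3 \<cdot>\<^sub>m M"
  shows "M = M1 \<or> M = M2 \<or> M = M3 \<or> M = M4 \<or> M = M5 \<or> M = M6"
proof -
  interpret positive_matrix_square_eq_triple M k
    using assms by unfold_locales (simp_all add: numeral_2_eq_2)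
  consider "k = 1" | "k = 2" | "k = 3"
    using assms(1) dim_le_3 by linarith
  then show ?thesis
    by cases (use dim_1 dim_2 dim_3 in blast)+
qed

end
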